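(* There are absolute constants $K>0$ and $d_0$ such that for all $d\ge d_0$, a standard Gaussian vector $\mathbf{w}\sim\mathcal{N}(0,I_d)$ satisfies $\|\mathbf{w}\|_T\le K\sqrt{d}$ with probability at least $1-\exp(-2d/(\log d)^4)$. The same holds if $\mathbf{w}$ is instead distributed as $\mathcal{N}(0,I_d)$ conditioned on $w_1+\dots+w_d=0$ (i.e. $\mathbf{w}\sim\mathcal{N}(0,I_d-\mathbf{1}\mathbf{1}^T/d)$).
   Context: For $\mathbf{v}\in\mathbb{R}^d$ define \[\|\mathbf{v}\|_T^2=\sup_{\emptyset\ne S\subseteq[d]}\log^4(2d/|S|)\sum_{j\in S}v_j^2.\] *)

theory Defs
  imports "HOL-Probability.Probability"
begin

text \<open>Vectors in R^d are represented as functions nat => real, with coordinates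
  indexed by {..<d} (i.e. [d] shifted by one).\<close>

definition Tnorm_sq :: "nat \<Rightarrow> (nat \<Rightarrow> real) \<Rightarrow> real" where
  "Tnorm_sq d v = (SUP S \<in> {S. S \<subseteq> {..<d} \<and> S \<noteq> {}}.
      (ln (2 * real d / real (card S))) ^ 4 * (\<Sum>j\<in>S. (v j)\<^sup>2))"

definition Tnorm :: "nat \<Rightarrow> (nat \<Rightarrow> real) \<Rightarrow> real" where
  "Tnorm d v = sqrt (Tnorm_sq d v)"

definition std_gaussian :: "nat \<Rightarrow> (nat \<Rightarrow> real) measure" where
  "std_gaussian d = PiM {..<d} (\<lambda>_. density lborel std_normal_density)"

definition center :: "nat \<Rightarrow> (nat \<Rightarrow> real) \<Rightarrow> (nat \<Rightarrow> real)" where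
  "center d w = (\<lambda>i. if i < d then w i - (\<Sum>j<d. w j) / real d else undefined)"

text \<open>N(0, I_d - 1 1^T / d) = law of the centered standard Gaussian vector,
  i.e. N(0,I_d) conditioned on w_1 + ... + w_d = 0.\<close>
definition centered_gaussian :: "nat \<Rightarrow> (nat \<Rightarrow> real) measure" where
  "centered_gaussian d = distr (std_gaussian d) (PiM {..<d} (\<lambda>_. lborel)) (center d)"

end

theory Submission
  imports Defs "HOL-Real_Asymp.Real_Asymp"
begin

text \<open>Union bound over all nonempty coordinate sets S, grouped by k = |S|. For fixed S
  the sum of squares of the coordinates in S is chi-squared with k degrees of freedom, so
  the Chernoff bound with parameter 1/4 gives P(sum_S w_j^2 \<ge> t) \<le> 2^(k/2) exp(-t/4).
  Taking t = 1600 d / ln(2d/k)^4, this beats the number (ed/k)^k of such sets, because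
  k ln(2d/k)^5 = O(d). Centering costs only a constant factor: the mean m satisfies
  d m^2 \<le> |w|^2, and |w|^2 is controlled by the term of S = [d].\<close>

lemma power_div_fact_le_exp:
  fixes x :: real
  assumes "0 \<le> x"
  shows "x ^ n / fact n \<le> exp x"
proof -
  have "x ^ n / fact n \<le> (\<Sum>m\<le>n. x ^ m / fact m)"
    by (rule member_le_sum) (use assms in auto)
  also have "\<dots> \<le> exp x"
    using assms summable_exp_generic[of x]
    by (auto simp: exp_def divide_inverse ac_simps intro!: sum_le_suminf)
  finally show ?thesis .
qed

lemma binomial_le_exp_mult_div_power: "real (n choose k) \<le> (exp 1 * real n / real k) ^ k"
proof (cases "k = 0")
  case False
  have "real (n choose k) * fact k \<le> real n ^ k"
    using binomial_fact_pow[of n k] by (metis of_nat_fact of_nat_le_iff of_nat_mult of_nat_power)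
  hence "real (n choose k) \<le> real n ^ k / fact k"
    by (simp add: field_simps)
  also have "\<dots> = (real n / real k) ^ k * (real k ^ k / fact k)"
    using False by (simp add: power_divide)
  also have "\<dots> \<le> (real n / real k) ^ k * exp (real k)"
    by (intro mult_left_mono power_div_fact_le_exp) auto
  also have "exp (real k) = exp 1 ^ k"
    using exp_of_nat_mult[of k 1] by simp
  also have "(real n / real k) ^ k * exp 1 ^ k = (exp 1 * real n / real k) ^ k"
    by (simp add: power_mult_distrib power_divide)
  finally show ?thesis .
qed simp

lemma mult_ln_div_power_le:
  fixes a b :: real
  assumes "0 < a" "a \<le> b"
  shows "a * ln (b / a) ^ n \<le> fact n * b"
proof -
  have "ln (b / a) ^ n \<le> fact n * exp (ln (b / a))"
    using power_div_fact_le_exp[of "ln (b / a)" n] assms by (simp add: field_simps)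
  also have "\<dots> = fact n * b / a"
    using assms by simp
  finally show ?thesis
    using assms by (simp add: field_simps)
qed

lemma le_exp_div_ln_power:
  fixes x :: real
  assumes "1 < x" "ln x ^ 5 \<le> x"
  shows "x \<le> exp (x / ln x ^ 4)"
proof -
  have "ln x \<le> x / ln x ^ 4"
    using assms by (simp add: pos_le_divide_eq power_Suc[symmetric] mult.commute)
  thus ?thesis
    using assms by (metis exp_le_cancel_iff exp_ln less_trans zero_less_one)
qed

lemma ln_two_ge_half: "1 / 2 \<le> ln (2::real)"
  using exp_half_le2 by (subst ln_ge_iff) auto

lemma binomial_mult_sqrt_two_power_le:
  assumes "1 \<le> k" "k \<le> d"
  shows "real (d choose k) * sqrt 2 ^ k \<le> exp (real k * (1 + ln (2 * real d / real k)))"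
proof -
  have "0 < 2 * real d / real k"
    using assms by simp
  have "real (d choose k) * sqrt 2 ^ k \<le> (exp 1 * real d / real k) ^ k * 2 ^ k"
    using sqrt2_less_2 by (intro mult_mono binomial_le_exp_mult_div_power power_mono) auto
  also have "\<dots> = (exp 1 * (2 * real d / real k)) ^ k"
    by (simp add: power_mult_distrib power_divide)
  also have "exp 1 * (2 * real d / real k) = exp (1 + ln (2 * real d / real k))"
    using \<open>0 < 2 * real d / real k\<close> by (simp add: exp_add)
  also have "exp (1 + ln (2 * real d / real k)) ^ k = exp (real k * (1 + ln (2 * real d / real k)))"
    by (simp add: exp_of_nat_mult)
  finally show ?thesis .
qed

lemma binomial_chi_square_tail_le:
  assumes "2 \<le> d" "1 \<le> k" "k \<le> d"
  shows "real (d choose k) * sqrt 2 ^ k * exp (- 400 * real d / ln (2 * real d / real k) ^ 4)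
    \<le> exp (- 3 * real d / ln (real d) ^ 4)"
proof -
  define L where "L = ln (2 * real d / real k)"
  define q where "q = real d / L ^ 4"
  have k: "0 < real k" "real k \<le> 2 * real d"
    using assms by auto
  have L_pos: "0 < L"
    unfolding L_def using assms by (simp add: field_simps)
  have "real k * L ^ 4 \<le> 48 * real d" "real k * L ^ 5 \<le> 240 * real d"
    using mult_ln_div_power_le[of "real k" "2 * real d" 4]
      mult_ln_div_power_le[of "real k" "2 * real d" 5] k
    by (simp_all add: L_def fact_numeral)
  moreover have "real k * (1 + L) * L ^ 4 = real k * L ^ 4 + real k * L ^ 5"
    by (simp add: algebra_simps eval_nat_numeral)
  ultimately have "real k * (1 + L) * L ^ 4 \<le> 288 * real d"
    by linarith
  hence k_L: "real k * (1 + L) \<le> 288 * q"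
    using L_pos by (simp add: q_def pos_le_divide_eq)
  have "L \<le> ln (2 * real d)"
    unfolding L_def using k by (subst ln_le_cancel_iff) (auto simp: field_simps)
  also have "\<dots> \<le> 2 * ln (real d)"
    using assms by (simp add: ln_mult ln_le_cancel_iff)
  finally have "L ^ 4 \<le> 16 * ln (real d) ^ 4"
    using power_mono[of L "2 * ln (real d)" 4] L_pos by simp
  hence ln_q: "7 * (real d / ln (real d) ^ 4) \<le> 112 * q"
    using L_pos assms by (simp add: q_def field_simps)
  have "0 \<le> real d / ln (real d) ^ 4"
    by simp
  hence "real k * (1 + L) - 400 * q \<le> - 3 * real d / ln (real d) ^ 4"
    using k_L ln_q by linarith
  hence "exp (real k * (1 + L)) * exp (- 400 * real d / L ^ 4) \<le> exp (- 3 * real d / ln (real d) ^ 4)"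
    by (simp add: q_def flip: exp_add)
  thus ?thesis
    using binomial_mult_sqrt_two_power_le[OF assms(2,3)] unfolding L_def
    by (meson exp_ge_zero mult_right_mono order_trans)
qed

abbreviation std_normal :: "real measure" where
  "std_normal \<equiv> density lborel std_normal_density"

lemma prob_space_std_normal: "prob_space std_normal"
  by (rule prob_space_normal_density) simp

lemma prob_space_std_gaussian: "prob_space (std_gaussian d)"
  unfolding std_gaussian_def by (intro prob_space_PiM prob_space_std_normal)

lemma measurable_component_PiM_borel:
  assumes "sets M = sets borel" "j \<in> I"
  shows "(\<lambda>w. w j) \<in> borel_measurable (PiM I (\<lambda>_. M))"
  using assms by (metis measurable_component_singleton measurable_cong_sets)

lemma nn_integral_std_normal_exp_square:
  "(\<integral>\<^sup>+ x. ennreal (exp (x\<^sup>2 / 4)) \<partial>std_normal) = ennreal (sqrt 2)"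
proof -
  have density: "std_normal_density x * exp (x\<^sup>2 / 4) = sqrt 2 * normal_density 0 (sqrt 2) x"
    for x :: real
  proof -
    have "exp (- x\<^sup>2 / 2) * exp (x\<^sup>2 / 4) = exp (- x\<^sup>2 / 4)"
      by (simp add: exp_add[symmetric])
    moreover have "sqrt (2 * pi * (sqrt 2)\<^sup>2) = sqrt 2 * sqrt (2 * pi)"
      by (simp add: real_sqrt_mult[symmetric])
    ultimately show ?thesis
      unfolding std_normal_density_def normal_density_def by (simp add: field_simps)
  qed
  have "(\<integral>\<^sup>+ x. ennreal (exp (x\<^sup>2 / 4)) \<partial>std_normal)
      = (\<integral>\<^sup>+ x. ennreal (sqrt 2) * ennreal (normal_density 0 (sqrt 2) x) \<partial>lborel)"
    by (subst nn_integral_density) (auto simp: density simp flip: ennreal_mult intro!: nn_integral_cong)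
  also have "\<dots> = ennreal (sqrt 2) * (\<integral>\<^sup>+ x. ennreal (normal_density 0 (sqrt 2) x) \<partial>lborel)"
    by (simp add: nn_integral_cmult)
  also have "(\<integral>\<^sup>+ x. ennreal (normal_density 0 (sqrt 2) x) \<partial>lborel) = 1"
    by (subst nn_integral_eq_integral) auto
  finally show ?thesis
    by simp
qed

lemma nn_integral_std_gaussian_exp_sum_squares:
  assumes "S \<subseteq> {..<d}"
  shows "(\<integral>\<^sup>+ w. ennreal (exp ((\<Sum>j\<in>S. (w j)\<^sup>2) / 4)) \<partial>std_gaussian d)
    = ennreal (sqrt 2 ^ card S)"
proof -
  interpret product_sigma_finite "\<lambda>_::nat. std_normal"
    unfolding product_sigma_finite_def
    using prob_space_std_normal prob_space_imp_sigma_finite by blast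
  define f where "f = (\<lambda>j x. ennreal (if j \<in> S then exp (x\<^sup>2 / 4) else 1))"
  have "finite S"
    using assms finite_subset by blast
  have product: "ennreal (exp ((\<Sum>j\<in>S. (w j)\<^sup>2) / 4)) = (\<Prod>j\<in>{..<d}. f j (w j))"
    for w :: "nat \<Rightarrow> real"
  proof -
    have "exp ((\<Sum>j\<in>S. (w j)\<^sup>2) / 4) = (\<Prod>j\<in>S. exp ((w j)\<^sup>2 / 4))"
      using \<open>finite S\<close> by (simp add: sum_divide_distrib exp_sum)
    also have "\<dots> = (\<Prod>j\<in>{..<d}. if j \<in> S then exp ((w j)\<^sup>2 / 4) else 1)"
      using assms by (simp add: prod.If_cases Int_absorb1)
    finally show ?thesis
      unfolding f_def by (simp add: prod_ennreal)
  qed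
  have factor: "integral\<^sup>N std_normal (f j) = (if j \<in> S then ennreal (sqrt 2) else 1)" for j
  proof -
    interpret prob_space std_normal
      by (rule prob_space_std_normal)
    show ?thesis
      by (cases "j \<in> S") (use emeasure_space_1 in \<open>auto simp: f_def nn_integral_std_normal_exp_square\<close>)
  qed
  have "(\<integral>\<^sup>+ w. ennreal (exp ((\<Sum>j\<in>S. (w j)\<^sup>2) / 4)) \<partial>std_gaussian d)
     = (\<Prod>j\<in>{..<d}. integral\<^sup>N std_normal (f j))"
    unfolding std_gaussian_def product by (rule product_nn_integral_prod) (auto simp: f_def)
  also have "\<dots> = ennreal (sqrt 2) ^ card S"
    using assms by (simp add: factor prod.If_cases Int_absorb1)
  finally show ?thesis
    by (simp add: ennreal_power)
qed

lemma std_gaussian_sum_squares_tail: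
  assumes "S \<subseteq> {..<d}"
  shows "measure (std_gaussian d) {w \<in> space (std_gaussian d). t \<le> (\<Sum>j\<in>S. (w j)\<^sup>2)}
     \<le> sqrt 2 ^ card S * exp (- t / 4)"
proof -
  let ?M = "std_gaussian d"
  interpret prob_space ?M
    by (rule prob_space_std_gaussian)
  have [measurable]: "(\<lambda>w. \<Sum>j\<in>S. (w j)\<^sup>2) \<in> borel_measurable ?M"
    unfolding std_gaussian_def using assms
    by (intro borel_measurable_sum borel_measurable_power measurable_component_PiM_borel) auto
  have "emeasure ?M {w \<in> space ?M. t \<le> (\<Sum>j\<in>S. (w j)\<^sup>2)}
      \<le> ennreal (exp (- (1/4) * t)) *
        (\<integral>\<^sup>+ w. ennreal (exp (1/4 * (\<Sum>j\<in>S. (w j)\<^sup>2))) * indicator (space ?M) w \<partial>?M)"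
    by (rule Chernoff_ineq_nn_integral_ge) auto
  also have "(\<integral>\<^sup>+ w. ennreal (exp (1/4 * (\<Sum>j\<in>S. (w j)\<^sup>2))) * indicator (space ?M) w \<partial>?M)
      = (\<integral>\<^sup>+ w. ennreal (exp ((\<Sum>j\<in>S. (w j)\<^sup>2) / 4)) \<partial>?M)"
    by (rule nn_integral_cong) simp
  also have "\<dots> = ennreal (sqrt 2 ^ card S)"
    by (rule nn_integral_std_gaussian_exp_sum_squares[OF assms])
  finally have "ennreal (measure ?M {w \<in> space ?M. t \<le> (\<Sum>j\<in>S. (w j)\<^sup>2)})
      \<le> ennreal (sqrt 2 ^ card S * exp (- t / 4))"
    by (simp add: emeasure_eq_measure ennreal_mult'[symmetric] mult.commute)
  thus ?thesis
    by (simp add: ennreal_le_iff)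
qed

definition coord_subsets :: "nat \<Rightarrow> nat set set" where
  "coord_subsets d = {S. S \<subseteq> {..<d} \<and> S \<noteq> {}}"

definition Tnorm_term :: "nat \<Rightarrow> (nat \<Rightarrow> real) \<Rightarrow> nat set \<Rightarrow> real" where
  "Tnorm_term d v S = ln (2 * real d / real (card S)) ^ 4 * (\<Sum>j\<in>S. (v j)\<^sup>2)"

lemma Tnorm_sq_eq_SUP: "Tnorm_sq d v = (SUP S \<in> coord_subsets d. Tnorm_term d v S)"
  unfolding Tnorm_sq_def coord_subsets_def Tnorm_term_def ..

lemma finite_coord_subsets: "finite (coord_subsets d)"
  unfolding coord_subsets_def by (rule finite_subset[of _ "Pow {..<d}"]) auto

lemma card_coord_subsets:
  assumes "S \<in> coord_subsets d"
  shows "1 \<le> card S" "card S \<le> d"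
proof -
  have "S \<subseteq> {..<d}" "S \<noteq> {}"
    using assms unfolding coord_subsets_def by auto
  moreover have "finite S"
    using \<open>S \<subseteq> {..<d}\<close> finite_subset by blast
  ultimately show "1 \<le> card S" "card S \<le> d"
    using card_mono[of "{..<d}" S] by (auto simp: Suc_le_eq card_gt_0_iff)
qed

lemma ln_card_coord_subsets_pos:
  assumes "S \<in> coord_subsets d"
  shows "0 < ln (2 * real d / real (card S))"
  using card_coord_subsets[OF assms] by (simp add: field_simps)

lemma Tnorm_term_le_Tnorm_sq: "S \<in> coord_subsets d \<Longrightarrow> Tnorm_term d v S \<le> Tnorm_sq d v"
  unfolding Tnorm_sq_eq_SUP by (intro cSUP_upper bdd_above_finite finite_imageI finite_coord_subsets)

lemma Tnorm_sq_le_iff: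
  assumes "1 \<le> d"
  shows "Tnorm_sq d v \<le> c \<longleftrightarrow> (\<forall>S \<in> coord_subsets d. Tnorm_term d v S \<le> c)"
proof -
  have "{0} \<in> coord_subsets d"
    using assms unfolding coord_subsets_def by auto
  thus ?thesis
    unfolding Tnorm_sq_eq_SUP using finite_coord_subsets
    by (subst cSUP_le_iff) (auto intro: bdd_above_finite)
qed

lemma Tnorm_sq_gtE:
  assumes "1 \<le> d" "c < Tnorm_sq d w"
  obtains S where "S \<in> coord_subsets d"
    "c / ln (2 * real d / real (card S)) ^ 4 \<le> (\<Sum>j\<in>S. (w j)\<^sup>2)"
proof -
  obtain S where S: "S \<in> coord_subsets d" "c < Tnorm_term d w S"
    using assms Tnorm_sq_le_iff[of d w c] by (auto simp: not_le)
  moreover have "0 < ln (2 * real d / real (card S))"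
    using ln_card_coord_subsets_pos[OF S(1)] .
  ultimately show ?thesis
    using that by (simp add: Tnorm_term_def pos_divide_le_eq mult.commute)
qed

lemma Tnorm_le_mult_sqrt_iff:
  assumes "0 \<le> K"
  shows "Tnorm d v \<le> K * sqrt (real d) \<longleftrightarrow> Tnorm_sq d v \<le> K\<^sup>2 * real d"
proof -
  have "K * sqrt (real d) = sqrt (K\<^sup>2 * real d)"
    using assms by (simp add: real_sqrt_mult)
  thus ?thesis
    unfolding Tnorm_def by simp
qed

lemma Tnorm_sq_measurable:
  assumes "sets M = sets borel"
  shows "Tnorm_sq d \<in> borel_measurable (PiM {..<d} (\<lambda>_. M))"
proof -
  have "(\<lambda>v. Tnorm_term d v S) \<in> borel_measurable (PiM {..<d} (\<lambda>_. M))" if "S \<in> coord_subsets d" for S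
    using that assms unfolding Tnorm_term_def coord_subsets_def
    by (intro borel_measurable_times borel_measurable_const borel_measurable_sum
        borel_measurable_power measurable_component_PiM_borel) auto
  thus ?thesis
    unfolding Tnorm_sq_eq_SUP[abs_def] using finite_coord_subsets
    by (intro borel_measurable_cSUP countable_finite bdd_above_finite finite_imageI) auto
qed

lemma Tnorm_measurable:
  assumes "sets M = sets borel"
  shows "Tnorm d \<in> borel_measurable (PiM {..<d} (\<lambda>_. M))"
  unfolding Tnorm_def[abs_def]
  by (rule measurable_compose[OF Tnorm_sq_measurable[OF assms] borel_measurable_sqrt])

lemma sum_coord_subsets_by_card:
  "(\<Sum>S \<in> coord_subsets d. f (card S)) = (\<Sum>k = 1..d. real (d choose k) * f k)"
proof -
  have "(\<Sum>S \<in> coord_subsets d. f (card S))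
      = (\<Sum>k = 1..d. \<Sum>S \<in> {S \<in> coord_subsets d. card S = k}. f (card S))"
    using finite_coord_subsets card_coord_subsets by (intro sum.group[symmetric]) auto
  also have "\<dots> = (\<Sum>k = 1..d. real (d choose k) * f k)"
  proof (rule sum.cong[OF refl])
    fix k assume "k \<in> {1..d}"
    hence "{S \<in> coord_subsets d. card S = k} = {S. S \<subseteq> {..<d} \<and> card S = k}"
      unfolding coord_subsets_def by auto
    thus "(\<Sum>S \<in> {S \<in> coord_subsets d. card S = k}. f (card S)) = real (d choose k) * f k"
      using n_subsets[of "{..<d}" k] by simp
  qed
  finally show ?thesis .
qed

lemma sum_squares_center_le:
  assumes "S \<subseteq> {..<d}"
  shows "(\<Sum>j\<in>S. (center d w j)\<^sup>2)
    \<le> 2 * (\<Sum>j\<in>S. (w j)\<^sup>2) + 2 * real (card S) * ((\<Sum>j<d. w j) / real d)\<^sup>2"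
proof -
  define m where "m = (\<Sum>j<d. w j) / real d"
  have "(\<Sum>j\<in>S. (center d w j)\<^sup>2) = (\<Sum>j\<in>S. (w j - m)\<^sup>2)"
    using assms by (intro sum.cong) (auto simp: center_def m_def)
  also have "\<dots> \<le> (\<Sum>j\<in>S. 2 * (w j)\<^sup>2 + 2 * m\<^sup>2)"
    by (intro sum_mono) (smt (verit) zero_le_power2 power2_diff power2_sum)
  also have "\<dots> = 2 * (\<Sum>j\<in>S. (w j)\<^sup>2) + 2 * real (card S) * m\<^sup>2"
    by (simp add: sum.distrib sum_distrib_left)
  finally show ?thesis
    unfolding m_def .
qed

lemma mean_square_le: "real d * ((\<Sum>j<d. w j) / real d)\<^sup>2 \<le> (\<Sum>j<d. (w j)\<^sup>2)"
  using sum_squared_le_sum_of_squares[of w "{..<d}"]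
  by (cases "d = 0") (simp_all add: power_divide field_simps power2_eq_square)

lemma sum_squares_le_Tnorm_sq:
  assumes "1 \<le> d"
  shows "(\<Sum>j<d. (w j)\<^sup>2) \<le> 16 * Tnorm_sq d w"
proof -
  have "{..<d} \<in> coord_subsets d"
    using assms unfolding coord_subsets_def by (auto simp: lessThan_empty_iff)
  hence "ln 2 ^ 4 * (\<Sum>j<d. (w j)\<^sup>2) \<le> Tnorm_sq d w"
    using Tnorm_term_le_Tnorm_sq[of "{..<d}" d w] assms by (simp add: Tnorm_term_def)
  moreover have "(1 / 2) ^ 4 * (\<Sum>j<d. (w j)\<^sup>2) \<le> ln 2 ^ 4 * (\<Sum>j<d. (w j)\<^sup>2)"
    using ln_two_ge_half by (intro mult_right_mono power_mono sum_nonneg) auto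
  ultimately show ?thesis
    by (simp add: power_divide)
qed

lemma Tnorm_sq_center_le:
  assumes "1 \<le> d"
  shows "Tnorm_sq d (center d w) \<le> 1538 * Tnorm_sq d w"
proof (subst Tnorm_sq_le_iff[OF assms], intro ballI)
  fix S assume S: "S \<in> coord_subsets d"
  define L where "L = ln (2 * real d / real (card S))"
  define m where "m = (\<Sum>j<d. w j) / real d"
  have card: "0 < real (card S)" "real (card S) \<le> 2 * real d"
    using card_coord_subsets[OF S] by auto
  have "0 \<le> L"
    unfolding L_def using ln_card_coord_subsets_pos[OF S] by simp
  have "real (card S) * L ^ 4 \<le> 48 * real d"
    using mult_ln_div_power_le[of "real (card S)" "2 * real d" 4] card
    by (simp add: L_def fact_numeral)
  hence "L ^ 4 * (real (card S) * m\<^sup>2) \<le> 48 * (real d * m\<^sup>2)"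
    by (simp add: mult.assoc mult.left_commute mult_right_mono flip: mult.assoc)
  also have "\<dots> \<le> 48 * (16 * Tnorm_sq d w)"
    using mean_square_le[of d w] sum_squares_le_Tnorm_sq[OF assms, of w] unfolding m_def by linarith
  finally have mean_part: "L ^ 4 * (real (card S) * m\<^sup>2) \<le> 768 * Tnorm_sq d w"
    by simp
  have "Tnorm_term d (center d w) S \<le> L ^ 4 * (2 * (\<Sum>j\<in>S. (w j)\<^sup>2) + 2 * real (card S) * m\<^sup>2)"
    unfolding Tnorm_term_def L_def[symmetric] m_def using S \<open>0 \<le> L\<close>
    by (intro mult_left_mono sum_squares_center_le) (auto simp: coord_subsets_def)
  also have "\<dots> = 2 * Tnorm_term d w S + 2 * (L ^ 4 * (real (card S) * m\<^sup>2))"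
    unfolding Tnorm_term_def L_def by (simp add: algebra_simps)
  also have "\<dots> \<le> 1538 * Tnorm_sq d w"
    using Tnorm_term_le_Tnorm_sq[OF S, of w] mean_part by linarith
  finally show "Tnorm_term d (center d w) S \<le> 1538 * Tnorm_sq d w" .
qed

lemma std_gaussian_Tnorm_sq_tail:
  assumes "2 \<le> d" "ln (real d) ^ 5 \<le> real d"
  shows "measure (std_gaussian d) {w \<in> space (std_gaussian d). 1600 * real d < Tnorm_sq d w}
    \<le> exp (- 2 * real d / ln (real d) ^ 4)"
proof -
  let ?M = "std_gaussian d"
  interpret prob_space ?M
    by (rule prob_space_std_gaussian)
  define L where "L S = ln (2 * real d / real (card S))" for S :: "nat set"
  define B where "B S = {w \<in> space ?M. 1600 * real d / L S ^ 4 \<le> (\<Sum>j\<in>S. (w j)\<^sup>2)}" for S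
  define E where "E = exp (- 3 * real d / ln (real d) ^ 4)"
  have B_sets: "B ` coord_subsets d \<subseteq> sets ?M"
    unfolding B_def coord_subsets_def std_gaussian_def
    by (auto intro!: borel_measurable_le borel_measurable_sum borel_measurable_power
        measurable_component_PiM_borel)
  have cover: "{w \<in> space ?M. 1600 * real d < Tnorm_sq d w} \<subseteq> (\<Union>S \<in> coord_subsets d. B S)"
  proof
    fix w assume w: "w \<in> {w \<in> space ?M. 1600 * real d < Tnorm_sq d w}"
    then obtain S where "S \<in> coord_subsets d"
        "1600 * real d / L S ^ 4 \<le> (\<Sum>j\<in>S. (w j)\<^sup>2)"
      using Tnorm_sq_gtE[of d "1600 * real d" w] assms(1) unfolding L_def by auto
    thus "w \<in> (\<Union>S \<in> coord_subsets d. B S)"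
      using w unfolding B_def by blast
  qed
  have "measure ?M {w \<in> space ?M. 1600 * real d < Tnorm_sq d w} \<le> measure ?M (\<Union>S \<in> coord_subsets d. B S)"
    using cover B_sets finite_coord_subsets by (intro finite_measure_mono) auto
  also have "\<dots> \<le> (\<Sum>S \<in> coord_subsets d. measure ?M (B S))"
    using B_sets finite_coord_subsets by (intro finite_measure_subadditive_finite) auto
  also have "\<dots> \<le> (\<Sum>S \<in> coord_subsets d.
      sqrt 2 ^ card S * exp (- 400 * real d / ln (2 * real d / real (card S)) ^ 4))"
  proof (rule sum_mono)
    fix S assume "S \<in> coord_subsets d"
    thus "measure ?M (B S) \<le> sqrt 2 ^ card S * exp (- 400 * real d / ln (2 * real d / real (card S)) ^ 4)"
      using std_gaussian_sum_squares_tail[of S d "1600 * real d / L S ^ 4"]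
      by (simp add: B_def L_def coord_subsets_def)
  qed
  also have "\<dots> = (\<Sum>k = 1..d.
      real (d choose k) * (sqrt 2 ^ k * exp (- 400 * real d / ln (2 * real d / real k) ^ 4)))"
    by (rule sum_coord_subsets_by_card)
  also have "\<dots> \<le> (\<Sum>k = 1..d. E)"
    unfolding E_def using binomial_chi_square_tail_le assms(1)
    by (intro sum_mono) (auto simp: mult.assoc)
  also have "\<dots> = real d * E"
    by simp
  also have "\<dots> \<le> exp (- 2 * real d / ln (real d) ^ 4)"
    using le_exp_div_ln_power[of "real d"] assms
    unfolding E_def by (auto intro: order.trans[OF mult_right_mono] simp: mult_exp_exp)
  finally show ?thesis .
qed

lemma std_gaussian_Tnorm_sq_le_prob:
  assumes "2 \<le> d" "ln (real d) ^ 5 \<le> real d"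
  shows "1 - exp (- 2 * real d / ln (real d) ^ 4)
    \<le> measure (std_gaussian d) {w \<in> space (std_gaussian d). Tnorm_sq d w \<le> 1600 * real d}"
proof -
  let ?M = "std_gaussian d"
  interpret prob_space ?M
    by (rule prob_space_std_gaussian)
  have "Tnorm_sq d \<in> borel_measurable ?M"
    unfolding std_gaussian_def by (rule Tnorm_sq_measurable) simp
  hence "{w \<in> space ?M. Tnorm_sq d w \<le> 1600 * real d} \<in> sets ?M"
    by measurable
  moreover have "space ?M - {w \<in> space ?M. Tnorm_sq d w \<le> 1600 * real d}
      = {w \<in> space ?M. 1600 * real d < Tnorm_sq d w}"
    by auto
  ultimately show ?thesis
    using std_gaussian_Tnorm_sq_tail[OF assms] prob_compl by fastforce
qed

lemma measurable_center: "center d \<in> measurable (std_gaussian d) (PiM {..<d} (\<lambda>_. lborel))"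
proof -
  have "(\<lambda>w i. if i < d then w i - (\<Sum>j<d. w j) / real d else undefined)
      \<in> measurable (std_gaussian d) (PiM {..<d} (\<lambda>_. lborel))"
  proof (rule measurable_PiM_single')
    fix i assume "i \<in> {..<d}"
    thus "(\<lambda>w. if i < d then w i - (\<Sum>j<d. w j) / real d else undefined)
        \<in> measurable (std_gaussian d) lborel"
      unfolding std_gaussian_def using measurable_component_PiM_borel[of std_normal]
      by (simp add: borel_measurable_diff borel_measurable_sum borel_measurable_divide)
  qed (auto simp: PiE_def extensional_def)
  thus ?thesis
    unfolding center_def .
qed

lemma std_gaussian_Tnorm_le_prob:
  assumes "2 \<le> d" "ln (real d) ^ 5 \<le> real d"
  shows "1 - exp (- 2 * real d / ln (real d) ^ 4)
    \<le> measure (std_gaussian d) {w \<in> space (std_gaussian d). Tnorm d w \<le> 1600 * sqrt (real d)}"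
proof -
  let ?M = "std_gaussian d"
  interpret prob_space ?M
    by (rule prob_space_std_gaussian)
  have "Tnorm d \<in> borel_measurable ?M"
    unfolding std_gaussian_def by (rule Tnorm_measurable) simp
  hence "{w \<in> space ?M. Tnorm d w \<le> 1600 * sqrt (real d)} \<in> sets ?M"
    by measurable
  moreover have "{w \<in> space ?M. Tnorm_sq d w \<le> 1600 * real d}
      \<subseteq> {w \<in> space ?M. Tnorm d w \<le> 1600 * sqrt (real d)}"
    by (auto simp: Tnorm_le_mult_sqrt_iff)
  ultimately have "measure ?M {w \<in> space ?M. Tnorm_sq d w \<le> 1600 * real d}
      \<le> measure ?M {w \<in> space ?M. Tnorm d w \<le> 1600 * sqrt (real d)}"
    by (intro finite_measure_mono)
  thus ?thesis
    using std_gaussian_Tnorm_sq_le_prob[OF assms] by linarith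
qed

lemma centered_gaussian_Tnorm_le_prob:
  assumes "2 \<le> d" "ln (real d) ^ 5 \<le> real d"
  shows "1 - exp (- 2 * real d / ln (real d) ^ 4)
    \<le> measure (centered_gaussian d) {w \<in> space (centered_gaussian d). Tnorm d w \<le> 1600 * sqrt (real d)}"
proof -
  let ?M = "std_gaussian d" and ?N = "PiM {..<d} (\<lambda>_. lborel) :: (nat \<Rightarrow> real) measure"
  let ?A = "{w \<in> space ?N. Tnorm d w \<le> 1600 * sqrt (real d)}"
  interpret prob_space ?M
    by (rule prob_space_std_gaussian)
  have "Tnorm d \<in> borel_measurable ?N"
    by (rule Tnorm_measurable) simp
  hence A: "?A \<in> sets ?N"
    by measurable
  have "{w \<in> space ?M. Tnorm_sq d w \<le> 1600 * real d} \<subseteq> center d -` ?A \<inter> space ?M"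
  proof
    fix w assume w: "w \<in> {w \<in> space ?M. Tnorm_sq d w \<le> 1600 * real d}"
    have "Tnorm_sq d (center d w) \<le> 1538 * Tnorm_sq d w"
      using Tnorm_sq_center_le assms(1) by simp
    also have "\<dots> \<le> 1600\<^sup>2 * real d"
      using w by simp
    finally have "Tnorm d (center d w) \<le> 1600 * sqrt (real d)"
      by (simp add: Tnorm_le_mult_sqrt_iff)
    thus "w \<in> center d -` ?A \<inter> space ?M"
      using w measurable_space[OF measurable_center] by simp
  qed
  hence "measure ?M {w \<in> space ?M. Tnorm_sq d w \<le> 1600 * real d}
      \<le> measure ?M (center d -` ?A \<inter> space ?M)"
    using measurable_sets[OF measurable_center A] by (intro finite_measure_mono)
  also have "\<dots> = measure (centered_gaussian d) ?A"
    unfolding centered_gaussian_def by (rule measure_distr[OF measurable_center A, symmetric])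
  finally show ?thesis
    using std_gaussian_Tnorm_sq_le_prob[OF assms] by (simp add: centered_gaussian_def)
qed

theorem lemma4p4:
  shows "\<exists>K::real. K > 0 \<and> (\<exists>d0::nat. \<forall>d\<ge>d0.
    measure (std_gaussian d) {w \<in> space (std_gaussian d). Tnorm d w \<le> K * sqrt (real d)}
      \<ge> 1 - exp (- 2 * real d / (ln (real d)) ^ 4) \<and>
    measure (centered_gaussian d) {w \<in> space (centered_gaussian d). Tnorm d w \<le> K * sqrt (real d)}
      \<ge> 1 - exp (- 2 * real d / (ln (real d)) ^ 4))"
proof -
  have "eventually (\<lambda>d. 2 \<le> d \<and> ln (real d) ^ 5 \<le> real d) sequentially"
    by (intro eventually_conj eventually_ge_at_top) real_asymp
  then obtain d0 where "\<And>d. d0 \<le> d \<Longrightarrow> 2 \<le> d \<and> ln (real d) ^ 5 \<le> real d"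
    unfolding eventually_sequentially by blast
  thus ?thesis
    using std_gaussian_Tnorm_le_prob centered_gaussian_Tnorm_le_prob
    by (intro exI[of _ 1600] exI[of _ d0]) auto
qed

end
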